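(* Let $\phi:M_2\to M_2$ be a linear map with $\sigma_{\mathcal{K}}(\phi(A))=\sigma_{\mathcal{K}}(A)$ for all $A\in M_2$. Then there exist $b\ge 0$ and signs $s,t\in\{1,-1\}$ such that $$\phi(E_{21})=\begin{bmatrix} s\sqrt{b^2+b} & -t\,b\\ t(b+1) & -s\sqrt{b^2+b}\end{bmatrix}.$$
   Context: $M_2$: real $2\times2$ matrices; $E_{21}$ is the matrix with $1$ in position $(2,1)$ and $0$ elsewhere. Lorentz cone $\mathcal{K}=\{(x_1,x_2)^T:|x_1|\le x_2\}$; a real $\lambda$ is an L-eigenvalue of $A$ if there is a nonzero $x\in\mathcal{K}$ with $(A-\lambda I)x\in\mathcal{K}$ and $x^T(A-\lambda I)x=0$; $\sigma_{\mathcal{K}}(A)$ is the set of L-eigenvalues. *)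

theory Defs
  imports "HOL-Analysis.Analysis"
begin

definition lorentz_cone :: "(real^2) set" where
  "lorentz_cone = {x. \<bar>x $ 1\<bar> \<le> x $ 2}"

definition L_eig :: "real^2^2 \<Rightarrow> real set" where
  "L_eig A = {l. \<exists>x. x \<noteq> 0 \<and> x \<in> lorentz_cone \<and>
      (A - l *\<^sub>R mat 1) *v x \<in> lorentz_cone \<and>
      x \<bullet> ((A - l *\<^sub>R mat 1) *v x) = 0}"

definition E21 :: "real^2^2" where
  "E21 = (\<chi> i j. if i = 2 \<and> j = 1 then 1 else 0)"

end

theory Submission
  imports Defs
begin

text \<open>
  The vectors (1,1) and (-1,1) span the two boundary rays of the Lorentz cone, so in the basis
  they form the cone becomes the nonnegative orthant and the L-eigenvalues of A become the
  Pareto (complementarity) eigenvalues of the matrix B of A in that basis.  For a 2x2 matrix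
  these are the diagonal entries whose column has a nonnegative off-diagonal entry, together
  with the eigenvalues having a positive eigenvector.  Both E21 and -E21 have L-spectrum
  {0, 1/2}, hence so do M = \<phi> E21 and -M.  Matching the alternatives for 1/2 and -1/2 pins the
  diagonal of B to (1/2, -1/2) or (-1/2, 1/2) with strict signs off the diagonal, and 0 forces a
  positive kernel vector; so M is nilpotent with M12 + M21 = \<plusminus>1, and AM-GM applied to the
  off-diagonal entries of B fixes the sign of M12.  Parametrising such nilpotent matrices gives
  the stated form.
\<close>

definition pareto_eig :: "real^'n^'n \<Rightarrow> real set" where
  "pareto_eig B = {l. \<exists>u. u \<noteq> 0 \<and> (\<forall>i. 0 \<le> u$i) \<and>
      (\<forall>i. 0 \<le> ((B - l *\<^sub>R mat 1) *v u)$i) \<and>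
      u \<bullet> ((B - l *\<^sub>R mat 1) *v u) = 0}"

lemma matrix_vector_mult_2:
  fixes B :: "'a::comm_ring_1^2^2"
  shows "(B *v u)$1 = B$1$1 * u$1 + B$1$2 * u$2"
    and "(B *v u)$2 = B$2$1 * u$1 + B$2$2 * u$2"
  by (simp_all add: matrix_vector_mult_def sum_2)

lemma matrix_vector_mult_diff_scaleR_mat_1:
  fixes B :: "real^'n^'n"
  shows "(B - l *\<^sub>R mat 1) *v u = B *v u - l *\<^sub>R u"
  by (simp add: matrix_vector_mult_diff_rdistrib flip: scaleR_matrix_vector_assoc)

lemma in_pareto_eig_2_iff:
  fixes B :: "real^2^2"
  shows "l \<in> pareto_eig B \<longleftrightarrow>
    (l = B$1$1 \<and> 0 \<le> B$2$1) \<or> (l = B$2$2 \<and> 0 \<le> B$1$2) \<or>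
    (\<exists>u. 0 < u$1 \<and> 0 < u$2 \<and> B *v u = l *\<^sub>R u)"
  (is "_ \<longleftrightarrow> ?first \<or> ?second \<or> ?interior")
proof
  assume "l \<in> pareto_eig B"
  then obtain u where "u \<noteq> 0" "\<forall>i. 0 \<le> u$i"
    and v: "\<forall>i. 0 \<le> (B *v u - l *\<^sub>R u)$i"
    and compl: "u \<bullet> (B *v u - l *\<^sub>R u) = 0"
    by (auto simp: pareto_eig_def matrix_vector_mult_diff_scaleR_mat_1)
  then have u: "0 \<le> u$1" "0 \<le> u$2" "0 < u$1 \<or> 0 < u$2"
    by (auto simp: vec_eq_iff forall_2 order.order_iff_strict)
  define v1 v2 where "v1 = (B$1$1 - l) * u$1 + B$1$2 * u$2"
    and "v2 = B$2$1 * u$1 + (B$2$2 - l) * u$2"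
  have "0 \<le> v1" "0 \<le> v2" "u$1 * v1 + u$2 * v2 = 0"
    using v compl
    by (auto simp: v1_def v2_def forall_2 inner_vec_def sum_2 matrix_vector_mult_2 algebra_simps)
  moreover have "0 \<le> u$1 * v1" "0 \<le> u$2 * v2"
    using u \<open>0 \<le> v1\<close> \<open>0 \<le> v2\<close> by simp_all
  ultimately have "u$1 * v1 = 0" "u$2 * v2 = 0"
    by linarith+
  then consider "u$2 = 0" "0 < u$1" "v1 = 0" | "u$1 = 0" "0 < u$2" "v2 = 0"
    | "0 < u$1" "0 < u$2" "v1 = 0" "v2 = 0"
    using u by fastforce
  then show "?first \<or> ?second \<or> ?interior"
  proof cases
    case 1
    then show ?thesis using \<open>0 \<le> v2\<close> by (auto simp: v1_def v2_def zero_le_mult_iff)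
  next
    case 2
    then show ?thesis using \<open>0 \<le> v1\<close> by (auto simp: v1_def v2_def zero_le_mult_iff)
  next
    case 3
    then have "B *v u = l *\<^sub>R u"
      by (auto simp: v1_def v2_def vec_eq_iff forall_2 matrix_vector_mult_2 algebra_simps)
    with 3 show ?thesis by blast
  qed
next
  have e1: "vector [1, 0] \<noteq> (0::real^2)" and e2: "vector [0, 1] \<noteq> (0::real^2)"
    by (simp_all add: vec_eq_iff forall_2)
  assume "?first \<or> ?second \<or> ?interior"
  then show "l \<in> pareto_eig B"
  proof (elim disjE exE conjE)
    assume "l = B$1$1" "0 \<le> B$2$1"
    then show ?thesis using e1
      unfolding pareto_eig_def matrix_vector_mult_diff_scaleR_mat_1
      by (intro CollectI exI[of _ "vector [1, 0]"])
        (simp add: forall_2 inner_vec_def sum_2 matrix_vector_mult_2)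
  next
    assume "l = B$2$2" "0 \<le> B$1$2"
    then show ?thesis using e2
      unfolding pareto_eig_def matrix_vector_mult_diff_scaleR_mat_1
      by (intro CollectI exI[of _ "vector [0, 1]"])
        (simp add: forall_2 inner_vec_def sum_2 matrix_vector_mult_2)
  next
    fix u :: "real^2"
    assume "0 < u$1" "0 < u$2" "B *v u = l *\<^sub>R u"
    moreover from \<open>0 < u$1\<close> have "u \<noteq> 0" by auto
    ultimately show ?thesis
      unfolding pareto_eig_def matrix_vector_mult_diff_scaleR_mat_1
      by (intro CollectI exI[of _ u]) (simp add: forall_2)
  qed
qed

text \<open>
  ray_basis u has coordinates u in the basis (1,1), (-1,1), and ray_matrix A is the matrix of A
  in that basis, i.e. the conjugate of A by the matrix with columns (1,1) and (-1,1).
\<close>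

definition ray_basis :: "real^2 \<Rightarrow> real^2" where
  "ray_basis u = vector [u$1 - u$2, u$1 + u$2]"

definition ray_matrix :: "real^2^2 \<Rightarrow> real^2^2" where
  "ray_matrix A = vector [
     vector [(A$1$1 + A$1$2 + A$2$1 + A$2$2) / 2, (- A$1$1 + A$1$2 - A$2$1 + A$2$2) / 2],
     vector [(- A$1$1 - A$1$2 + A$2$1 + A$2$2) / 2, (A$1$1 - A$1$2 - A$2$1 + A$2$2) / 2]]"

lemma ray_basis_in_lorentz_cone_iff: "ray_basis u \<in> lorentz_cone \<longleftrightarrow> (\<forall>i. 0 \<le> u$i)"
  by (auto simp: ray_basis_def lorentz_cone_def forall_2)

lemma ray_basis_eq_0_iff: "ray_basis u = 0 \<longleftrightarrow> u = 0"
  by (auto simp: ray_basis_def vec_eq_iff forall_2)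

lemma surj_ray_basis: "surj ray_basis"
proof (rule surjI)
  show "ray_basis (vector [(x$1 + x$2) / 2, (x$2 - x$1) / 2]) = x" for x
    by (simp add: ray_basis_def vec_eq_iff forall_2 field_simps)
qed

lemma inner_ray_basis: "ray_basis u \<bullet> ray_basis v = 2 * (u \<bullet> v)"
  by (simp add: ray_basis_def inner_vec_def sum_2 algebra_simps)

lemma matrix_vector_mult_ray_basis: "A *v ray_basis u = ray_basis (ray_matrix A *v u)"
  by (simp add: ray_basis_def ray_matrix_def vec_eq_iff forall_2 matrix_vector_mult_2 field_simps)

lemma ray_matrix_diff: "ray_matrix (A - B) = ray_matrix A - ray_matrix B"
  by (simp add: ray_matrix_def vec_eq_iff forall_2 field_simps)

lemma ray_matrix_scaleR_mat_1: "ray_matrix (l *\<^sub>R mat 1) = l *\<^sub>R mat 1"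
  by (simp add: ray_matrix_def vec_eq_iff forall_2 mat_def)

lemma ray_matrix_uminus: "ray_matrix (- A) = - ray_matrix A"
  by (simp add: ray_matrix_def vec_eq_iff forall_2 field_simps)

lemma L_eig_eq_pareto_eig: "L_eig A = pareto_eig (ray_matrix A)"
proof -
  have ex_ray_basis: "(\<exists>x. P x) \<longleftrightarrow> (\<exists>u. P (ray_basis u))" for P
    using surj_ray_basis by (metis surjD)
  show ?thesis
    unfolding L_eig_def pareto_eig_def
    by (subst ex_ray_basis) (simp add: matrix_vector_mult_ray_basis ray_basis_in_lorentz_cone_iff
        ray_basis_eq_0_iff inner_ray_basis ray_matrix_diff ray_matrix_scaleR_mat_1)
qed

lemma uminus_matrix_vector_mult_eq_scaleR_iff: "(- B) *v u = l *\<^sub>R u \<longleftrightarrow> B *v u = (- l) *\<^sub>R u"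
  for B :: "real^'n^'n"
proof -
  have "(- B) *v u = - (B *v u)"
    by (metis diff_0 matrix_vector_mult_0 matrix_vector_mult_diff_rdistrib)
  then show ?thesis
    by (metis minus_equation_iff scaleR_minus_left)
qed

lemma L_eig_E21: "L_eig E21 = {0, 1/2}" and L_eig_uminus_E21: "L_eig (- E21) = {0, 1/2}"
proof -
  have B: "ray_matrix E21 = vector [vector [1/2, -1/2], vector [1/2, -1/2]]"
    by (simp add: ray_matrix_def E21_def)
  have eig: "(\<exists>u. 0 < u$1 \<and> 0 < u$2 \<and> ray_matrix E21 *v u = l *\<^sub>R u) \<longleftrightarrow> l = 0" for l
  proof
    assume "\<exists>u. 0 < u$1 \<and> 0 < u$2 \<and> ray_matrix E21 *v u = l *\<^sub>R u"
    then obtain u :: "real^2"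
      where u: "0 < u$1" "0 < u$2" and eq: "ray_matrix E21 *v u = l *\<^sub>R u"
      by blast
    have e1: "(u$1 - u$2) / 2 = l * u$1" and e2: "(u$1 - u$2) / 2 = l * u$2"
      using arg_cong[OF eq, of "\<lambda>v. v$1"] arg_cong[OF eq, of "\<lambda>v. v$2"]
      by (simp_all add: B matrix_vector_mult_2 diff_divide_distrib)
    then have "l * u$1 = l * u$2" by linarith
    then have "l = 0 \<or> u$1 = u$2" by simp
    with e1 u show "l = 0" by auto
  next
    assume "l = 0"
    then show "\<exists>u. 0 < u$1 \<and> 0 < u$2 \<and> ray_matrix E21 *v u = l *\<^sub>R u"
      by (intro exI[of _ "vector [1, 1]"]) (simp add: B vec_eq_iff forall_2 matrix_vector_mult_2)
  qed
  show "L_eig E21 = {0, 1/2}"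
    unfolding L_eig_eq_pareto_eig set_eq_iff in_pareto_eig_2_iff eig by (auto simp: B)
  show "L_eig (- E21) = {0, 1/2}"
    unfolding L_eig_eq_pareto_eig ray_matrix_uminus set_eq_iff in_pareto_eig_2_iff
      uminus_matrix_vector_mult_eq_scaleR_iff eig
    by (auto simp: B)
qed

lemma pareto_eig_0_half_shape:
  fixes B :: "real^2^2"
  assumes B: "pareto_eig B = {0, 1/2}" and uminus_B: "pareto_eig (- B) = {0, 1/2}"
  obtains t where "t \<in> {1, -1}" "B$1$1 = t / 2" "B$2$2 = - t / 2" "t * B$1$2 < 0" "0 < t * B$2$1"
    "det B = 0"
proof -
  define interior where "interior l \<longleftrightarrow> (\<exists>u. 0 < u$1 \<and> 0 < u$2 \<and> B *v u = l *\<^sub>R u)" for l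
  have eig: "l \<in> pareto_eig B \<longleftrightarrow>
      (l = B$1$1 \<and> 0 \<le> B$2$1) \<or> (l = B$2$2 \<and> 0 \<le> B$1$2) \<or> interior l" for l
    by (simp add: in_pareto_eig_2_iff interior_def)
  have eig_uminus: "l \<in> pareto_eig (- B) \<longleftrightarrow>
      (l = - B$1$1 \<and> B$2$1 \<le> 0) \<or> (l = - B$2$2 \<and> B$1$2 \<le> 0) \<or> interior (- l)" for l
    by (simp add: in_pareto_eig_2_iff interior_def uminus_matrix_vector_mult_eq_scaleR_iff)
  have "(B$1$1 = 1/2 \<and> 0 < B$2$1) \<or> (B$2$2 = 1/2 \<and> 0 < B$1$2)"
    using B uminus_B eig[of "1/2"] eig_uminus[of "-1/2"] by auto
  moreover have "(B$1$1 = -1/2 \<and> B$2$1 < 0) \<or> (B$2$2 = -1/2 \<and> B$1$2 < 0)"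
    using B uminus_B eig[of "-1/2"] eig_uminus[of "1/2"] by auto
  ultimately consider
      "B$1$1 = 1/2" "B$2$2 = -1/2" "B$1$2 < 0" "0 < B$2$1"
    | "B$1$1 = -1/2" "B$2$2 = 1/2" "0 < B$1$2" "B$2$1 < 0"
    by fastforce
  note cases = this
  then have "interior 0"
    using B eig[of 0] by (cases; auto)
  then obtain u :: "real^2" where "0 < u$1" "B *v u = 0"
    by (auto simp: interior_def)
  moreover from \<open>0 < u$1\<close> have "u \<noteq> 0"
    by auto
  ultimately have "det B = 0"
    using inj_matrix_vector_mult invertible_det_nz vec.inj_iff_eq_0 by blast
  from cases show thesis
  proof cases
    case 1
    with \<open>det B = 0\<close> show thesis by (intro that[of 1]) auto
  next
    case 2
    with \<open>det B = 0\<close> show thesis by (intro that[of "-1"]) auto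
  qed
qed

lemma sum_ge_1_if_mult_eq_quarter:
  fixes x y :: real
  assumes "0 \<le> x" "0 \<le> y" "x * y = 1/4"
  shows "1 \<le> x + y"
proof (rule power2_le_imp_le)
  have "(x + y)^2 = (x - y)^2 + 4 * (x * y)"
    by (simp add: power2_eq_square algebra_simps)
  then show "1^2 \<le> (x + y)^2"
    using assms(3) by simp
  show "0 \<le> x + y"
    using assms(1,2) by simp
qed

lemma L_eig_0_half_shape:
  fixes A :: "real^2^2"
  assumes "L_eig A = {0, 1/2}" and "L_eig (- A) = {0, 1/2}"
  obtains t where "t \<in> {1, -1}" "A$1$1 + A$2$2 = 0" "det A = 0" "A$1$2 + A$2$1 = t" "t * A$1$2 \<le> 0"
proof -
  define B where "B = ray_matrix A"
  have "pareto_eig B = {0, 1/2}" "pareto_eig (- B) = {0, 1/2}"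
    using assms by (simp_all add: B_def L_eig_eq_pareto_eig ray_matrix_uminus)
  then obtain t where t: "t \<in> {1, -1}" "B$1$1 = t / 2" "B$2$2 = - t / 2"
    and signs: "t * B$1$2 < 0" "0 < t * B$2$1" and "det B = 0"
    by (rule pareto_eig_0_half_shape)
  have entries: "A$1$1 + A$2$2 = B$1$1 + B$2$2" "A$1$2 + A$2$1 = B$1$1 - B$2$2"
      "2 * A$1$2 = B$1$1 - B$2$2 + B$1$2 - B$2$1" "det B = det A"
    by (simp_all add: B_def ray_matrix_def det_2 field_simps)
  have "t * t = 1"
    using t(1) by auto
  moreover have "B$1$2 * B$2$1 = - 1/4"
    using \<open>det B = 0\<close> t by (auto simp: det_2)
  ultimately have "(t * B$2$1) * (- t * B$1$2) = 1/4"
    by (simp add: algebra_simps)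
  then have "1 \<le> t * B$2$1 - t * B$1$2"
    using sum_ge_1_if_mult_eq_quarter[of "t * B$2$1" "- t * B$1$2"] signs by simp
  then have "t * A$1$2 \<le> 0"
    using entries(3) t by auto
  then show thesis
    using that t entries \<open>det B = 0\<close> by simp
qed

lemma nilpotent_2_entries_form:
  fixes a c d e t :: real
  assumes "t \<in> {1, -1}" "a + e = 0" "a * e = c * d" "c + d = t" "t * c \<le> 0"
  obtains b s where "b \<ge> 0" "s \<in> {1, -1}" "a = s * sqrt (b^2 + b)" "c = - t * b" "d = t * (b + 1)"
    "e = - s * sqrt (b^2 + b)"
proof -
  define b where "b = - t * c"
  define s :: real where "s = (if a \<ge> 0 then 1 else -1)"
  have "t * t = 1"
    using assms(1) by auto
  then have c: "c = - t * b" and d: "d = t * (b + 1)"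
    using assms(4) by (auto simp: b_def algebra_simps)
  have "e = - a"
    using assms(2) by simp
  then have "a^2 = b^2 + b"
    using assms(3) \<open>t * t = 1\<close> by (simp add: c d power2_eq_square algebra_simps)
  then have "sqrt (b^2 + b) = \<bar>a\<bar>"
    by (metis real_sqrt_abs)
  then have "a = s * sqrt (b^2 + b)"
    by (simp add: s_def)
  moreover have "b \<ge> 0" "s \<in> {1, -1}"
    using assms(5) by (auto simp: b_def s_def)
  ultimately show thesis
    using that c d assms(2) by (metis add.inverse_unique minus_mult_left)
qed

theorem lemma4p5:
  fixes \<phi> :: "real^2^2 \<Rightarrow> real^2^2"
  assumes "linear \<phi>"
    and "\<And>A. L_eig (\<phi> A) = L_eig A"
  shows "\<exists>b s t. b \<ge> 0 \<and> s \<in> {1, -1} \<and> t \<in> {1, -1} \<and>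
    \<phi> E21 = (\<chi> i j. if i = 1 \<and> j = 1 then s * sqrt (b^2 + b)
                   else if i = 1 \<and> j = 2 then - t * b
                   else if i = 2 \<and> j = 1 then t * (b + 1)
                   else - s * sqrt (b^2 + b))"
proof -
  define M where "M = \<phi> E21"
  have "L_eig M = {0, 1/2}"
    using assms(2) L_eig_E21 by (simp add: M_def)
  moreover have "L_eig (- M) = {0, 1/2}"
    using assms(2)[of "- E21"] L_eig_uminus_E21 linear_neg[OF assms(1)] by (simp add: M_def)
  ultimately obtain t where t: "t \<in> {1, -1}" and trace: "M$1$1 + M$2$2 = 0" and "det M = 0"
    and off_diagonal: "M$1$2 + M$2$1 = t" "t * M$1$2 \<le> 0"
    by (rule L_eig_0_half_shape)
  from \<open>det M = 0\<close> have "M$1$1 * M$2$2 = M$1$2 * M$2$1"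
    by (simp add: det_2)
  then obtain b s where "b \<ge> 0" "s \<in> {1, -1}" "M$1$1 = s * sqrt (b^2 + b)" "M$1$2 = - t * b"
    "M$2$1 = t * (b + 1)" "M$2$2 = - s * sqrt (b^2 + b)"
    by (rule nilpotent_2_entries_form[OF t trace _ off_diagonal])
  moreover from this have "M = (\<chi> i j. if i = 1 \<and> j = 1 then s * sqrt (b^2 + b)
                   else if i = 1 \<and> j = 2 then - t * b
                   else if i = 2 \<and> j = 1 then t * (b + 1)
                   else - s * sqrt (b^2 + b))"
    by (simp add: vec_eq_iff forall_2)
  ultimately show ?thesis
    using t unfolding M_def by blast
qed

end
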